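(* For each $i=1,\dots,n$, the function $x\mapsto W^{z^\ast}(x,c_i)$ is continuously differentiable on $(0,\infty)$. Moreover, if $z^\ast(c_i)>0$, then the right second derivative at $z^\ast(c_i)$ is at least the left one: $\partial_{xx}W^{z^\ast}(z^\ast(c_i)^+,c_i)\ge\partial_{xx}W^{z^\ast}(z^\ast(c_i)^-,c_i)$.
   Context: Let $\mu\in\mathbb R$, $\sigma>0$, $q>0$, $\Lambda>0$ and $S=\{c_0,c_1,\dots,c_n\}$ with $0=c_0<c_1<\dots<c_n$. For $c\ge0$, $\theta_1(c)=\frac{c-\mu-\sqrt{(c-\mu)^2+2q\sigma^2}}{\sigma^2}<0$. Define recursively $W^{z^\ast}(x,c_0)=\frac{\Lambda}{q}(1-e^{\theta_1(0)x})$ for $x\ge0$, and for $i\ge1$: $G_i(y)=\Big(1-\frac{q}{c_i+\Lambda}W^{z^\ast}(y,c_{i-1})\Big)e^{-\theta_1(c_i)y}$ for $y\ge0$, $z^\ast(c_i)=\min\big(\arg\min_{y\ge0}G_i(y)\big)$, $a^\ast(c_i)=G_i(z^\ast(c_i))$, and $W^{z^\ast}(x,c_i)=W^{z^\ast}(x,c_{i-1})$ for $0\le x\le z^\ast(c_i)$, $W^{z^\ast}(x,c_i)=\frac{c_i+\Lambda}{q}\big(1-a^\ast(c_i)e^{\theta_1(c_i)x}\big)$ for $x>z^\ast(c_i)$. (This is the value of the optimal multi-threshold emission strategy.) *)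

theory Defs
  imports "HOL-Analysis.Analysis"
begin

definition theta1 :: "real \<Rightarrow> real \<Rightarrow> real \<Rightarrow> real \<Rightarrow> real" where
  "theta1 mu sg q cc = (cc - mu - sqrt ((cc - mu)^2 + 2 * q * sg^2)) / sg^2"

definition Gfun :: "real \<Rightarrow> real \<Rightarrow> real \<Rightarrow> real \<Rightarrow> (nat \<Rightarrow> real) \<Rightarrow> (real \<Rightarrow> real) \<Rightarrow> nat \<Rightarrow> real \<Rightarrow> real" where
  "Gfun mu sg q Lam c Wprev i y =
     (1 - q / (c i + Lam) * Wprev y) * exp (- theta1 mu sg q (c i) * y)"

definition argmin_min :: "(real \<Rightarrow> real) \<Rightarrow> real" where
  "argmin_min G = Inf {y. 0 \<le> y \<and> (\<forall>y'. 0 \<le> y' \<longrightarrow> G y \<le> G y')}"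

text \<open>Wz ... i = the function x \<mapsto> W^{z*}(x, c_i).\<close>
fun Wz :: "real \<Rightarrow> real \<Rightarrow> real \<Rightarrow> real \<Rightarrow> (nat \<Rightarrow> real) \<Rightarrow> nat \<Rightarrow> real \<Rightarrow> real" where
  "Wz mu sg q Lam c 0 = (\<lambda>x. Lam / q * (1 - exp (theta1 mu sg q 0 * x)))"
| "Wz mu sg q Lam c (Suc i) =
     (let G = Gfun mu sg q Lam c (Wz mu sg q Lam c i) (Suc i);
          z = argmin_min G;
          a = G z
      in (\<lambda>x. if x \<le> z then Wz mu sg q Lam c i x
              else (c (Suc i) + Lam) / q * (1 - a * exp (theta1 mu sg q (c (Suc i)) * x))))"

definition zstar :: "real \<Rightarrow> real \<Rightarrow> real \<Rightarrow> real \<Rightarrow> (nat \<Rightarrow> real) \<Rightarrow> nat \<Rightarrow> real" where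
  "zstar mu sg q Lam c i = argmin_min (Gfun mu sg q Lam c (Wz mu sg q Lam c (i - 1)) i)"

end

theory Submission
  imports Defs
begin

text \<open>
  Write W for the previous value function W^{z*}(., c_{i-1}), C = c_i + Lambda,
  theta = theta_1(c_i) < 0, z = z*(c_i), and E(x) = C/q (1 - G_i(z) e^{theta x}) for the branch
  used beyond the threshold. The identity E(x) - W(x) = C/q e^{theta x} (G_i(x) - G_i(z)) shows
  E >= W on [0, oo) with equality at the minimiser z: the new branch touches the old value
  function from above. For z > 0 this forces smooth fit W'(z) = E'(z), so pasting keeps the value
  function C^1; and since W has the form A + B e^{s x} just left of z, touching also gives
  W''(z-) <= E''(z) = W''(z+). The bound W <= (c_{i-1} + Lambda)/q < C/q, carried through the
  induction on i, makes G_i coercive, so that the minimiser z exists.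
\<close>

lemma argmin_min_minimises:
  fixes G :: "real \<Rightarrow> real"
  assumes cont: "continuous_on {0..} G" and coercive: "filterlim G at_top at_top"
  shows "0 \<le> argmin_min G" "\<And>y. 0 \<le> y \<Longrightarrow> G (argmin_min G) \<le> G y"
proof -
  obtain Y where Y: "\<And>y. Y \<le> y \<Longrightarrow> G 0 \<le> G y"
    using coercive unfolding filterlim_at_top eventually_at_top_linorder by blast
  obtain y0 where y0: "y0 \<in> {0..max 0 Y}" "\<And>y. y \<in> {0..max 0 Y} \<Longrightarrow> G y0 \<le> G y"
    using continuous_attains_inf[of "{0..max 0 Y}" G] continuous_on_subset[OF cont] by auto
  have y0_min: "G y0 \<le> G y" if "0 \<le> y" for y
    using y0 Y[of y] that by (cases "y \<le> max 0 Y") force+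
  define S where "S = {y. 0 \<le> y \<and> (\<forall>y'. 0 \<le> y' \<longrightarrow> G y \<le> G y')}"
  have "S = {0..} \<inter> G -` {..G y0}"
    unfolding S_def using y0_min y0(1) by (auto intro: order_trans)
  then have "closed S"
    using continuous_closed_preimage[OF cont] by simp
  moreover have "y0 \<in> S" "bdd_below S"
    using y0_min y0(1) by (auto simp: S_def intro: bdd_belowI[of _ 0])
  ultimately have "Inf S \<in> S"
    using closed_contains_Inf by blast
  then show "0 \<le> argmin_min G" "\<And>y. 0 \<le> y \<Longrightarrow> G (argmin_min G) \<le> G y"
    unfolding argmin_min_def S_def[symmetric] by (auto simp: S_def)
qed

lemma has_real_derivative_paste:
  fixes f g :: "real \<Rightarrow> real"
  assumes f: "(f has_real_derivative d) (at z)" and g: "(g has_real_derivative d) (at z)"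
    and fg: "f z = g z"
  shows "((\<lambda>x. if x \<le> z then f x else g x) has_real_derivative d) (at z)"
proof -
  let ?h = "\<lambda>x. if x \<le> z then f x else g x"
  have "(?h has_real_derivative d) (at z within {..z})"
    using has_field_derivative_at_within[OF f]
    by (rule has_field_derivative_transform_within[where d = 1]) auto
  moreover have "(?h has_real_derivative d) (at z within {z..})"
    using has_field_derivative_at_within[OF g]
    by (rule has_field_derivative_transform_within[where d = 1]) (auto simp: fg)
  ultimately have "(?h has_real_derivative d) (at z within {..z} \<union> {z..})"
    by (simp only: has_field_derivative_iff) (simp add: at_within_union filterlim_sup)
  moreover have "{..z} \<union> {z..} = UNIV"
    by auto
  ultimately show ?thesis
    by simp
qed

lemma has_real_derivative_unique_left:
  fixes f g :: "real \<Rightarrow> real"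
  assumes f: "(f has_real_derivative d) (at z)" and g: "(g has_real_derivative d') (at z)"
    and "0 < e" and agree: "\<And>x. x \<in> {z - e<..z} \<Longrightarrow> f x = g x"
  shows "d = d'"
proof (rule has_field_derivative_unique)
  show "(g has_real_derivative d) (at z within {z - e..z})"
    using has_field_derivative_at_within[OF f] \<open>0 < e\<close>
    by (rule has_field_derivative_transform_within)
      (use \<open>0 < e\<close> in \<open>auto simp: agree dist_real_def\<close>)
  show "(g has_real_derivative d') (at z within {z - e..z})"
    using g by (rule has_field_derivative_at_within)
  show "at z within {z - e..z} \<noteq> bot"
    using \<open>0 < e\<close> by (simp add: at_within_Icc_at_left)
qed

lemma second_deriv_nonneg_at_left_min:
  fixes h h' h'' :: "real \<Rightarrow> real"
  assumes h: "\<And>x. (h has_real_derivative h' x) (at x)"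
    and h': "\<And>x. (h' has_real_derivative h'' x) (at x)"
    and cont: "isCont h'' z" and crit: "h' z = 0"
    and "0 < \<epsilon>" and left_min: "\<And>y. z - \<epsilon> < y \<Longrightarrow> y < z \<Longrightarrow> h z \<le> h y"
  shows "0 \<le> h'' z"
proof (rule ccontr)
  assume "\<not> 0 \<le> h'' z"
  then have "\<forall>\<^sub>F y in at z. h'' y < 0"
    using order_tendstoD(2)[OF cont[unfolded isCont_def]] by simp
  then obtain d where "0 < d" and neg: "\<And>y. y \<noteq> z \<Longrightarrow> dist y z < d \<Longrightarrow> h'' y < 0"
    unfolding eventually_at by blast
  define y where "y = z - min d \<epsilon> / 2"
  have y: "y < z" "z - \<epsilon> < y" "z - d < y"
    using \<open>0 < d\<close> \<open>0 < \<epsilon>\<close> by (auto simp: y_def)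
  obtain \<xi> where \<xi>: "y < \<xi>" "\<xi> < z" "h z - h y = (z - y) * h' \<xi>"
    using MVT2[OF y(1) h] by blast
  obtain \<eta> where \<eta>: "\<xi> < \<eta>" "\<eta> < z" "h' z - h' \<xi> = (z - \<xi>) * h'' \<eta>"
    using MVT2[OF \<xi>(2) h'] by blast
  have "h'' \<eta> < 0"
    using neg[of \<eta>] \<eta> \<xi> y by (auto simp: dist_real_def)
  then have "(z - \<xi>) * h'' \<eta> < 0"
    using \<eta> by (simp add: mult_pos_neg)
  then have "0 < h' \<xi>"
    using \<eta>(3) crit by simp
  then have "0 < (z - y) * h' \<xi>"
    using y(1) by simp
  then have "h y < h z"
    using \<xi>(3) by simp
  with left_min[OF y(2,1)] show False
    by simp
qed

lemma deriv_deriv_exp_affine: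
  "deriv (deriv (\<lambda>x. A + B * exp (s * x))) x = B * s\<^sup>2 * exp (s * x)"
proof -
  have "deriv (\<lambda>x. A + B * exp (s * x)) = (\<lambda>x. B * s * exp (s * x))"
    by (intro ext DERIV_imp_deriv) (auto intro!: derivative_eq_intros)
  then show ?thesis
    by (auto intro!: DERIV_imp_deriv derivative_eq_intros simp: power2_eq_square)
qed

lemma deriv_deriv_cong_open:
  assumes "open S" "x \<in> S" "\<And>y. y \<in> S \<Longrightarrow> f y = g y"
  shows "deriv (deriv f) x = deriv (deriv g) x"
proof -
  have near: "\<forall>\<^sub>F y in nhds x. y \<in> S" if "x \<in> S" for x
    using assms(1) that by (rule eventually_nhds_in_open)
  have "deriv f y = deriv g y" if "y \<in> S" for y
    by (rule deriv_cong_ev[OF eventually_mono[OF near[OF that]]]) (auto simp: assms(3))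
  then show ?thesis
    by (rule deriv_cong_ev[OF eventually_mono[OF near[OF assms(2)]]]) auto
qed

lemma deriv_deriv_tendsto_at_right_exp_affine:
  assumes "z < b" and "\<And>x. x \<in> {z<..<b} \<Longrightarrow> f x = A + B * exp (s * x)"
  shows "(deriv (deriv f) \<longlongrightarrow> B * s\<^sup>2 * exp (s * z)) (at_right z)"
proof -
  have "((\<lambda>x. B * s\<^sup>2 * exp (s * x)) \<longlongrightarrow> B * s\<^sup>2 * exp (s * z)) (at_right z)"
    by (intro tendsto_intros)
  moreover have "B * s\<^sup>2 * exp (s * x) = deriv (deriv f) x" if "x \<in> {z<..<b}" for x
    using deriv_deriv_cong_open[OF open_greaterThanLessThan that assms(2)]
    by (simp add: deriv_deriv_exp_affine)
  then have "\<forall>\<^sub>F x in at_right z. B * s\<^sup>2 * exp (s * x) = deriv (deriv f) x"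
    using assms(1) by (rule eventually_at_rightI)
  ultimately show ?thesis
    by (rule Lim_transform_eventually)
qed

lemma deriv_deriv_tendsto_at_left_exp_affine:
  assumes "a < z" and "\<And>x. x \<in> {a<..<z} \<Longrightarrow> f x = A + B * exp (s * x)"
  shows "(deriv (deriv f) \<longlongrightarrow> B * s\<^sup>2 * exp (s * z)) (at_left z)"
proof -
  have "((\<lambda>x. B * s\<^sup>2 * exp (s * x)) \<longlongrightarrow> B * s\<^sup>2 * exp (s * z)) (at_left z)"
    by (intro tendsto_intros)
  moreover have "B * s\<^sup>2 * exp (s * x) = deriv (deriv f) x" if "x \<in> {a<..<z}" for x
    using deriv_deriv_cong_open[OF open_greaterThanLessThan that assms(2)]
    by (simp add: deriv_deriv_exp_affine)
  then have "\<forall>\<^sub>F x in at_left z. B * s\<^sup>2 * exp (s * x) = deriv (deriv f) x"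
    using assms(1) by (rule eventually_at_leftI)
  ultimately show ?thesis
    by (rule Lim_transform_eventually)
qed

text \<open>
  One step of the recursion: W = W^{z*}(., c_{i-1}), C = c_i + Lambda, theta = theta_1(c_i), and M
  bounds W; then G = G_i, z_opt = z*(c_i) and W_next = W^{z*}(., c_i).
\<close>
locale threshold_step =
  fixes W :: "real \<Rightarrow> real" and q C \<theta> M :: real
  assumes q_pos: "0 < q" and C_pos: "0 < C" and theta_neg: "\<theta> < 0"
    and W_cont: "continuous_on UNIV W" and W_C1: "W C1_differentiable_on {0<..}"
    and W_le: "\<And>x. W x \<le> M" and M_less: "M < C / q"
begin

definition G :: "real \<Rightarrow> real" where
  "G y = (1 - q / C * W y) * exp (- \<theta> * y)"

definition z_opt :: real where
  "z_opt = argmin_min G"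

definition E :: "real \<Rightarrow> real" where
  "E x = C / q * (1 - G z_opt * exp (\<theta> * x))"

definition W_next :: "real \<Rightarrow> real" where
  "W_next x = (if x \<le> z_opt then W x else E x)"

lemma G_lower_bound: "(1 - q / C * M) * exp (- \<theta> * y) \<le> G y"
  unfolding G_def using W_le[of y] q_pos C_pos
  by (intro mult_right_mono) (auto simp: field_simps)

lemma G_coercive: "filterlim G at_top at_top"
proof (rule filterlim_at_top_mono[OF _ always_eventually[OF allI[OF G_lower_bound]]])
  have "0 < 1 - q / C * M"
    using M_less q_pos C_pos by (simp add: field_simps)
  moreover have "filterlim (\<lambda>y. exp (- \<theta> * y)) at_top at_top"
    using theta_neg
    by (intro filterlim_compose[OF exp_at_top] filterlim_tendsto_pos_mult_at_top[OF tendsto_const])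
      (auto simp: filterlim_ident)
  ultimately show "filterlim (\<lambda>y. (1 - q / C * M) * exp (- \<theta> * y)) at_top at_top"
    by (intro filterlim_tendsto_pos_mult_at_top[OF tendsto_const])
qed

lemma G_z_opt_le:
  assumes "0 \<le> y"
  shows "G z_opt \<le> G y"
proof -
  have "continuous_on {0..} G"
    unfolding G_def by (intro continuous_intros continuous_on_subset[OF W_cont]) auto
  then show ?thesis
    unfolding z_opt_def using G_coercive assms by (rule argmin_min_minimises(2))
qed

lemma G_pos: "0 < G y"
proof -
  have "q * M < C"
    using M_less q_pos by (simp add: pos_less_divide_eq mult.commute)
  moreover have "q * W y \<le> q * M"
    using W_le q_pos by (intro mult_left_mono) auto
  ultimately have "q / C * W y < 1"
    using C_pos by (simp add: field_simps)
  then show ?thesis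
    by (simp add: G_def)
qed

lemma E_minus_W: "E x - W x = C / q * exp (\<theta> * x) * (G x - G z_opt)"
  using q_pos C_pos by (simp add: E_def G_def field_simps exp_minus)

lemma W_le_E:
  assumes "0 \<le> x"
  shows "W x \<le> E x"
proof -
  have "0 \<le> C / q * exp (\<theta> * x) * (G x - G z_opt)"
    using G_z_opt_le[OF assms] q_pos C_pos by simp
  then show ?thesis
    using E_minus_W[of x] by simp
qed

lemma E_z_opt: "E z_opt = W z_opt"
  using E_minus_W[of z_opt] by simp

lemma E_exp_affine: "E x = C / q + (- (C / q * G z_opt)) * exp (\<theta> * x)"
  by (simp add: E_def algebra_simps)

definition E' :: "real \<Rightarrow> real" where
  "E' x = - (C / q * G z_opt) * \<theta> * exp (\<theta> * x)"

lemma E_has_derivative: "(E has_real_derivative E' x) (at x)"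
  unfolding E_exp_affine[abs_def] E'_def using q_pos by (auto intro!: derivative_eq_intros)

lemma smooth_fit:
  assumes "0 < z_opt" and "(W has_real_derivative d) (at z_opt)"
  shows "d = E' z_opt"
proof -
  have "E' z_opt - d = 0"
  proof (rule DERIV_local_min[OF DERIV_diff[OF E_has_derivative assms(2)] assms(1)],
      intro allI impI)
    fix y assume "\<bar>z_opt - y\<bar> < z_opt"
    then show "E z_opt - W z_opt \<le> E y - W y"
      using W_le_E[of y] E_z_opt by simp
  qed
  then show ?thesis
    by simp
qed

lemma W_next_cont: "continuous_on UNIV W_next"
proof -
  have "continuous_on {x \<in> UNIV. x \<le> z_opt} W"
    by (rule continuous_on_subset[OF W_cont]) auto
  moreover have "continuous_on {x \<in> UNIV. z_opt \<le> x} E"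
    unfolding E_def[abs_def] by (intro continuous_intros)
  ultimately show ?thesis
    unfolding W_next_def[abs_def]
    by (rule continuous_on_cases_le[OF _ _ continuous_on_id]) (simp add: E_z_opt)
qed

lemma W_next_le: "W_next x \<le> C / q"
proof (cases "x \<le> z_opt")
  case True
  then show ?thesis
    using W_le[of x] M_less by (simp add: W_next_def)
next
  case False
  have "0 \<le> C / q * (G z_opt * exp (\<theta> * x))"
    using G_pos[of z_opt] C_pos q_pos by simp
  then show ?thesis
    using False by (simp add: W_next_def E_def right_diff_distrib)
qed


lemma W_next_C1: "W_next C1_differentiable_on {0<..}"
proof -
  obtain W' where W': "\<And>x. 0 < x \<Longrightarrow> (W has_real_derivative W' x) (at x)"
    and W'_cont: "continuous_on {0<..} W'"
    using W_C1 unfolding C1_differentiable_on_def has_real_derivative_iff_has_vector_derivative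
    by auto
  define D where "D x = (if x \<le> z_opt then W' x else E' x)" for x
  have fit: "W' z_opt = E' z_opt" if "0 < z_opt"
    using smooth_fit[OF that W'[OF that]] .
  have "(W_next has_real_derivative D x) (at x)" if "0 < x" for x
  proof (cases x z_opt rule: linorder_cases)
    case less
    have "(W_next has_real_derivative W' x) (at x)"
      using W'[OF that] open_lessThan
      by (rule has_field_derivative_transform_within_open)
        (use less in \<open>auto simp: W_next_def\<close>)
    then show ?thesis
      using less by (simp add: D_def)
  next
    case equal
    have "(E has_real_derivative W' z_opt) (at z_opt)"
      using E_has_derivative[of z_opt] fit that equal by simp
    then have "(W_next has_real_derivative W' z_opt) (at z_opt)"
      unfolding W_next_def[abs_def]
      by (rule has_real_derivative_paste[OF W'[OF that[unfolded equal]]]) (simp add: E_z_opt)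
    then show ?thesis
      using equal by (simp add: D_def)
  next
    case greater
    have "(W_next has_real_derivative E' x) (at x)"
      using E_has_derivative open_greaterThan
      by (rule has_field_derivative_transform_within_open)
        (use greater in \<open>auto simp: W_next_def\<close>)
    then show ?thesis
      using greater by (simp add: D_def)
  qed
  moreover have "continuous_on {0<..} D"
  proof -
    have "continuous_on {x \<in> {0<..}. x \<le> z_opt} W'"
      by (rule continuous_on_subset[OF W'_cont]) auto
    moreover have "continuous_on {x \<in> {0<..}. z_opt \<le> x} E'"
      unfolding E'_def[abs_def] by (intro continuous_intros)
    ultimately show ?thesis
      unfolding D_def[abs_def]
      by (rule continuous_on_cases_le[OF _ _ continuous_on_id]) (simp add: fit)
  qed
  ultimately show ?thesis
    unfolding C1_differentiable_on_def has_real_derivative_iff_has_vector_derivative[symmetric]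
    by auto
qed

lemma W_next_second_deriv_jump:
  assumes z_pos: "0 < z_opt" and "0 < \<epsilon>"
    and piece: "\<And>x. x \<in> {z_opt - \<epsilon><..z_opt} \<Longrightarrow> W x = A + B * exp (s * x)"
  shows "\<exists>L R. (deriv (deriv W_next) \<longlongrightarrow> R) (at_right z_opt)
             \<and> (deriv (deriv W_next) \<longlongrightarrow> L) (at_left z_opt) \<and> L \<le> R"
proof -
  define e where "e = min \<epsilon> z_opt"
  have "0 < e"
    using z_pos \<open>0 < \<epsilon>\<close> by (simp add: e_def)
  define a where "a = - (C / q * G z_opt)"
  have E_eq: "E x = C / q + a * exp (\<theta> * x)" for x
    by (simp add: E_exp_affine a_def)
  have right: "(deriv (deriv W_next) \<longlongrightarrow> a * \<theta>\<^sup>2 * exp (\<theta> * z_opt)) (at_right z_opt)"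
    by (rule deriv_deriv_tendsto_at_right_exp_affine[where b = "z_opt + 1"])
      (auto simp: W_next_def E_eq)
  have left: "(deriv (deriv W_next) \<longlongrightarrow> B * s\<^sup>2 * exp (s * z_opt)) (at_left z_opt)"
    by (rule deriv_deriv_tendsto_at_left_exp_affine[where a = "z_opt - e"])
      (use \<open>0 < e\<close> in \<open>auto simp: W_next_def piece e_def\<close>)
  define h where "h x = E x - (A + B * exp (s * x))" for x
  define h' where "h' x = a * \<theta> * exp (\<theta> * x) - B * s * exp (s * x)" for x
  define h'' where "h'' x = a * \<theta>\<^sup>2 * exp (\<theta> * x) - B * s\<^sup>2 * exp (s * x)" for x
  have "0 \<le> h'' z_opt"
  proof (rule second_deriv_nonneg_at_left_min[where h = h and h' = h' and z = z_opt,
        OF _ _ _ _ \<open>0 < e\<close>])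
    show "(h has_real_derivative h' x) (at x)" for x
      unfolding h_def[abs_def] h'_def E_eq by (auto intro!: derivative_eq_intros)
    show "(h' has_real_derivative h'' x) (at x)" for x
      unfolding h'_def[abs_def] h''_def
      by (auto intro!: derivative_eq_intros simp: power2_eq_square)
    show "isCont h'' z_opt"
      unfolding h''_def[abs_def] by (intro continuous_intros)
    obtain d where d: "(W has_real_derivative d) (at z_opt)"
      using W_C1 z_pos
      unfolding C1_differentiable_on_def has_real_derivative_iff_has_vector_derivative by auto
    have "d = B * s * exp (s * z_opt)"
      by (rule has_real_derivative_unique_left[where g = "\<lambda>x. A + B * exp (s * x)",
            OF d _ \<open>0 < e\<close>])
        (auto intro!: derivative_eq_intros simp: piece e_def)
    moreover have "d = a * \<theta> * exp (\<theta> * z_opt)"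
      using smooth_fit[OF z_pos d] by (simp add: E'_def a_def)
    ultimately show "h' z_opt = 0"
      by (simp add: h'_def)
    show "h z_opt \<le> h y" if "z_opt - e < y" "y < z_opt" for y
      using that W_le_E[of y] E_z_opt piece[of y] piece[of z_opt] \<open>0 < \<epsilon>\<close>
      by (auto simp: h_def e_def)
  qed
  then show ?thesis
    using left right by (auto simp: h''_def)
qed

end

lemma theta1_neg:
  assumes "0 < sg" and "0 < q"
  shows "theta1 mu sg q x < 0"
proof -
  have "sqrt ((x - mu)\<^sup>2) < sqrt ((x - mu)\<^sup>2 + 2 * q * sg\<^sup>2)"
    using assms by (intro real_sqrt_less_mono) simp
  then have "x - mu < sqrt ((x - mu)\<^sup>2 + 2 * q * sg\<^sup>2)"
    by simp
  then show ?thesis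
    unfolding theta1_def using assms by (simp add: divide_neg_pos)
qed

lemma c_nonneg:
  fixes c :: "nat \<Rightarrow> real"
  assumes "c 0 = 0" and "\<And>j. j < n \<Longrightarrow> c j < c (Suc j)" and "i \<le> n"
  shows "0 \<le> c i"
  using assms(3)
proof (induction i)
  case (Suc i)
  then show ?case
    using assms(2)[of i] by simp
qed (simp add: assms(1))

lemma Wz_Suc_eq:
  assumes "threshold_step (Wz mu sg q Lam c i) q (c (Suc i) + Lam) (theta1 mu sg q (c (Suc i))) M"
  shows "Wz mu sg q Lam c (Suc i)
      = threshold_step.W_next (Wz mu sg q Lam c i) q (c (Suc i) + Lam) (theta1 mu sg q (c (Suc i)))"
    and "zstar mu sg q Lam c (Suc i)
      = threshold_step.z_opt (Wz mu sg q Lam c i) q (c (Suc i) + Lam) (theta1 mu sg q (c (Suc i)))"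
proof -
  interpret threshold_step "Wz mu sg q Lam c i" q "c (Suc i) + Lam" "theta1 mu sg q (c (Suc i))" M
    by (fact assms)
  have G_eq: "Gfun mu sg q Lam c (Wz mu sg q Lam c i) (Suc i) = G"
    by (rule ext) (simp add: Gfun_def G_def)
  show "Wz mu sg q Lam c (Suc i) = W_next"
    unfolding W_next_def[abs_def] E_def z_opt_def by (simp add: G_eq Let_def)
  show "zstar mu sg q Lam c (Suc i) = z_opt"
    by (simp add: G_eq z_opt_def zstar_def)
qed

lemma Wz_threshold_step:
  assumes sg: "0 < sg" and q: "0 < q" and Lam: "0 < Lam"
    and c0: "c 0 = 0" and inc: "\<And>j. j < n \<Longrightarrow> c j < c (Suc j)" and "i < n"
  shows "threshold_step (Wz mu sg q Lam c i) q (c (Suc i) + Lam) (theta1 mu sg q (c (Suc i)))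
           ((c i + Lam) / q)"
proof -
  have params: "0 < c (Suc j) + Lam" "(c j + Lam) / q < (c (Suc j) + Lam) / q" if "j < n" for j
    using inc[OF that] c_nonneg[OF c0 inc less_imp_le[OF that]] Lam q
    by (auto simp: divide_strict_right_mono)
  show ?thesis
    using \<open>i < n\<close>
  proof (induction i)
    case 0
    have "(\<lambda>x. Lam / q * (1 - exp (theta1 mu sg q 0 * x))) C1_differentiable_on {0<..}"
      unfolding C1_differentiable_on_def has_real_derivative_iff_has_vector_derivative[symmetric]
      by (intro exI[of _ "\<lambda>x. - (Lam / q * (exp (theta1 mu sg q 0 * x) * theta1 mu sg q 0))"] conjI
          ballI continuous_intros) (use q in \<open>auto intro!: derivative_eq_intros\<close>)
    moreover have "Lam / q * (1 - exp (theta1 mu sg q 0 * x)) \<le> Lam / q" for x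
      using q Lam by (simp add: mult_le_cancel_left1 divide_le_cancel)
    ultimately show ?case
      using params[OF \<open>0 < n\<close>] q theta1_neg[OF sg q] c0
      by unfold_locales (auto intro!: continuous_intros)
  next
    case (Suc i)
    interpret threshold_step "Wz mu sg q Lam c i" q "c (Suc i) + Lam" "theta1 mu sg q (c (Suc i))"
      "(c i + Lam) / q"
      using Suc by simp
    show ?case
      unfolding Wz_Suc_eq(1)[OF threshold_step_axioms]
      using params[OF \<open>Suc i < n\<close>] q theta1_neg[OF sg q] W_next_cont W_next_C1 W_next_le
      by unfold_locales auto
  qed
qed

definition left_locally_exp_affine :: "(real \<Rightarrow> real) \<Rightarrow> bool" where
  "left_locally_exp_affine f \<longleftrightarrow>
     (\<forall>z. \<exists>\<epsilon>>0. \<exists>A B s. \<forall>x\<in>{z - \<epsilon><..z}. f x = A + B * exp (s * x))"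

lemma left_locally_exp_affineI:
  assumes "\<And>x. f x = A + B * exp (s * x)"
  shows "left_locally_exp_affine f"
  unfolding left_locally_exp_affine_def using assms zero_less_one by blast

lemma left_locally_exp_affine_paste:
  assumes f: "left_locally_exp_affine f" and g: "left_locally_exp_affine g"
  shows "left_locally_exp_affine (\<lambda>x. if x \<le> z then f x else g x)"
  unfolding left_locally_exp_affine_def
proof
  fix y
  show "\<exists>\<epsilon>>0. \<exists>A B s. \<forall>x\<in>{y - \<epsilon><..y}. (if x \<le> z then f x else g x) = A + B * exp (s * x)"
  proof (cases "y \<le> z")
    case True
    then show ?thesis
      using f unfolding left_locally_exp_affine_def by fastforce
  next
    case False
    obtain \<epsilon> A B s where "0 < \<epsilon>" "\<forall>x\<in>{y - \<epsilon><..y}. g x = A + B * exp (s * x)"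
      using g unfolding left_locally_exp_affine_def by blast
    with False show ?thesis
      by (intro exI[of _ "min \<epsilon> (y - z)"] conjI exI[of _ A] exI[of _ B] exI[of _ s]) auto
  qed
qed

lemma Wz_left_locally_exp_affine: "left_locally_exp_affine (Wz mu sg q Lam c i)"
proof (induction i)
  case 0
  show ?case
    by (rule left_locally_exp_affineI[where A = "Lam / q" and B = "- (Lam / q)"
          and s = "theta1 mu sg q 0"])
      (simp add: algebra_simps)
next
  case (Suc i)
  have "left_locally_exp_affine
      (\<lambda>x. (c (Suc i) + Lam) / q * (1 - a * exp (theta1 mu sg q (c (Suc i)) * x)))" for a
    by (rule left_locally_exp_affineI[where A = "(c (Suc i) + Lam) / q"
          and B = "- ((c (Suc i) + Lam) / q * a)" and s = "theta1 mu sg q (c (Suc i))"])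
      (simp add: algebra_simps)
  then show ?case
    unfolding Wz.simps Let_def by (rule left_locally_exp_affine_paste[OF Suc.IH])
qed

theorem mainTheorem13:
  fixes mu sg q Lam :: real and c :: "nat \<Rightarrow> real" and n i :: nat
  assumes "sg > 0" and "q > 0" and "Lam > 0"
    and "c 0 = 0" and "\<And>j. j < n \<Longrightarrow> c j < c (Suc j)"
    and "1 \<le> i" and "i \<le> n"
  shows "Wz mu sg q Lam c i C1_differentiable_on {0<..}
     \<and> (zstar mu sg q Lam c i > 0 \<longrightarrow>
          (\<exists>L R. (deriv (deriv (Wz mu sg q Lam c i)) \<longlongrightarrow> R) (at_right (zstar mu sg q Lam c i))
               \<and> (deriv (deriv (Wz mu sg q Lam c i)) \<longlongrightarrow> L) (at_left (zstar mu sg q Lam c i))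
               \<and> R \<ge> L))"
proof -
  obtain j where i: "i = Suc j"
    using \<open>1 \<le> i\<close> by (cases i) auto
  interpret threshold_step "Wz mu sg q Lam c j" q "c (Suc j) + Lam" "theta1 mu sg q (c (Suc j))"
    "(c j + Lam) / q"
    using Wz_threshold_step[OF assms(1-5), where i = j and mu = mu] \<open>i \<le> n\<close> i by simp
  have W: "Wz mu sg q Lam c i = W_next" and z: "zstar mu sg q Lam c i = z_opt"
    using Wz_Suc_eq[OF threshold_step_axioms] i by simp_all
  have "\<exists>L R. (deriv (deriv W_next) \<longlongrightarrow> R) (at_right z_opt)
          \<and> (deriv (deriv W_next) \<longlongrightarrow> L) (at_left z_opt) \<and> L \<le> R" if "0 < z_opt"
  proof -
    obtain \<epsilon> A B s where "0 < \<epsilon>"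
      and "\<forall>x\<in>{z_opt - \<epsilon><..z_opt}. Wz mu sg q Lam c j x = A + B * exp (s * x)"
      using Wz_left_locally_exp_affine unfolding left_locally_exp_affine_def by blast
    then show ?thesis
      using W_next_second_deriv_jump[OF that] by blast
  qed
  then show ?thesis
    unfolding W z using W_next_C1 by blast
qed

end
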